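(* Consider the amortized variant of the algorithmic framework described below with parameters $\gamma\in(0,1)$, $\eta=\gamma^{-1}$ and $\xi=\gamma^{-1}+\tfrac13$. Then the framework maintains $\ell_i\le(1+\eta)T$ for every machine $i$, where $\ell_i=\sum_{j\in \hat J_i\cup\check J_i}p_j/s_i$ is the total load of machine $i$ and $T$ is the current guess.
   Context: Problem: machines $1,\dots,m$ with speeds $s_1\ge s_2\ge\dots\ge s_m>0$; jobs arrive online, job $j$ has size $p_j>0$; the load of job $j$ on machine $i$ is $p_j/s_i$. Framework (amortized variant): it keeps a guess $T$, for each machine $i$ a partition of its jobs into old jobs $\hat J_i$ and new jobs $\check J_i$, and a potential $\pi_i$ per machine. Machine $i$ is saturated if $\check\ell_i:=\sum_{j\in\check J_i}p_j/s_i\ge T$, and $\eta$-eligible for job $j$ if $p_j/s_i\le \eta T$. Let $\tilde{\mathcal M}(\eta,j)$ be the set of machines that are $\eta$-eligible for $j$ and not saturated. When the first job $j_1$ arrives, set $T=p_{j_1}/s_1$ and place $j_1$ on machine 1. When a later job $j^*$ arrives, put it into a priority queue $Q$ (larger size = higher priority) and run: while $Q$ is nonempty, remove the largest job $j'$ from $Q$; then repeat: if $\tilde{\mathcal M}(\eta,j')\ne\emptyset$, choose a slowest machine $i'$ in it, move every $j\in\hat J_{i'}$ with $p_j\ge \eta^{-1}p_{j'}$ from $\hat J_{i'}$ to $\check J_{i'}$, and if $i'$ is still not saturated stop repeating; otherwise set $T:=\xi T$ and for every machine $i$ move all jobs of $\check J_i$ to $\hat J_i$ and set $\pi_i=0$.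 After a machine $i'$ is found, set $\pi:=\gamma p_{j'}+\pi_{i'}$; go through the jobs $j\in\hat J_{i'}$ in non-increasing order of size and, whenever $p_j\le\pi$, set $\pi:=\pi-p_j$ and move $j$ from $\hat J_{i'}$ into $Q$ (removing it from $i'$). Finally add $j'$ to $\check J_{i'}$ and set $\pi_{i'}:=\pi$. *)

theory Defs
  imports Main "HOL.Real"
begin

(* Jobs are identified by natural numbers (sizes given by p :: nat => real),
   machines by 1..m (speeds s :: nat => real). *)

datatype mode = Idle | Search nat

record cfg =
  Tg      :: real               (* current guess T *)
  hatJ    :: "nat \<Rightarrow> nat set"   (* old jobs of each machine *)
  chkJ    :: "nat \<Rightarrow> nat set"   (* new jobs of each machine *)
  pot     :: "nat \<Rightarrow> real"
  queue   :: "nat set"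
  mode    :: mode               (* Idle: between iterations of the while loop;
                                   Search j: job j removed from Q, in the repeat loop *)
  pending :: "nat list"         (* jobs that have not arrived yet *)

definition new_load :: "(nat \<Rightarrow> real) \<Rightarrow> (nat \<Rightarrow> real) \<Rightarrow> cfg \<Rightarrow> nat \<Rightarrow> real" where
  "new_load s p c i = (\<Sum>j\<in>chkJ c i. p j) / s i"

definition load :: "(nat \<Rightarrow> real) \<Rightarrow> (nat \<Rightarrow> real) \<Rightarrow> cfg \<Rightarrow> nat \<Rightarrow> real" where
  "load s p c i = (\<Sum>j\<in>hatJ c i \<union> chkJ c i. p j) / s i"

definition saturated :: "(nat \<Rightarrow> real) \<Rightarrow> (nat \<Rightarrow> real) \<Rightarrow> cfg \<Rightarrow> nat \<Rightarrow> bool" where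
  "saturated s p c i \<longleftrightarrow> new_load s p c i \<ge> Tg c"

definition eligible :: "real \<Rightarrow> (nat \<Rightarrow> real) \<Rightarrow> (nat \<Rightarrow> real) \<Rightarrow> cfg \<Rightarrow> nat \<Rightarrow> nat \<Rightarrow> bool" where
  "eligible \<eta> s p c j i \<longleftrightarrow> p j / s i \<le> \<eta> * Tg c"

definition Mt :: "nat \<Rightarrow> real \<Rightarrow> (nat \<Rightarrow> real) \<Rightarrow> (nat \<Rightarrow> real) \<Rightarrow> cfg \<Rightarrow> nat \<Rightarrow> nat set" where
  "Mt m \<eta> s p c j = {i \<in> {1..m}. eligible \<eta> s p c j i \<and> \<not> saturated s p c i}"

fun greedy :: "(nat \<Rightarrow> real) \<Rightarrow> real \<Rightarrow> nat list \<Rightarrow> nat set \<times> real" where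
  "greedy p \<pi> [] = ({}, \<pi>)"
| "greedy p \<pi> (j # js) =
     (if p j \<le> \<pi> then (let (R, \<pi>') = greedy p (\<pi> - p j) js in (insert j R, \<pi>'))
      else greedy p \<pi> js)"

definition promote :: "real \<Rightarrow> (nat \<Rightarrow> real) \<Rightarrow> cfg \<Rightarrow> nat \<Rightarrow> nat \<Rightarrow> cfg" where
  "promote \<eta> p c i j' =
     (let B = {j \<in> hatJ c i. p j \<ge> p j' / \<eta>}
      in c\<lparr>hatJ := (hatJ c)(i := hatJ c i - B), chkJ := (chkJ c)(i := chkJ c i \<union> B)\<rparr>)"

(* one step of the amortized framework, parameters eta = 1/gamma, xi = 1/gamma + 1/3 *)
inductive step :: "nat \<Rightarrow> (nat \<Rightarrow> real) \<Rightarrow> (nat \<Rightarrow> real) \<Rightarrow> real \<Rightarrow> cfg \<Rightarrow> cfg \<Rightarrow> bool"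
  for m :: nat and s :: "nat \<Rightarrow> real" and p :: "nat \<Rightarrow> real" and \<gamma> :: real where
  arrive: "\<lbrakk> mode c = Idle; queue c = {}; pending c = j # rest \<rbrakk> \<Longrightarrow>
     step m s p \<gamma> c (c\<lparr>queue := {j}, pending := rest\<rparr>)"
| pop: "\<lbrakk> mode c = Idle; j \<in> queue c; \<forall>k\<in>queue c. p k \<le> p j \<rbrakk> \<Longrightarrow>
     step m s p \<gamma> c (c\<lparr>queue := queue c - {j}, mode := Search j\<rparr>)"
| fail: "\<lbrakk> mode c = Search j; Mt m (1/\<gamma>) s p c j = {} \<rbrakk> \<Longrightarrow>
     step m s p \<gamma> c (c\<lparr>Tg := (1/\<gamma> + 1/3) * Tg c,
                         hatJ := (\<lambda>i. hatJ c i \<union> chkJ c i),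
                         chkJ := (\<lambda>i. {}), pot := (\<lambda>i. 0)\<rparr>)"
| fit_sat: "\<lbrakk> mode c = Search j; i \<in> Mt m (1/\<gamma>) s p c j;
              \<forall>k\<in>Mt m (1/\<gamma>) s p c j. s i \<le> s k;
              c' = promote (1/\<gamma>) p c i j; saturated s p c' i \<rbrakk> \<Longrightarrow>
     step m s p \<gamma> c c'"
| fit_assign: "\<lbrakk> mode c = Search j; i \<in> Mt m (1/\<gamma>) s p c j;
              \<forall>k\<in>Mt m (1/\<gamma>) s p c j. s i \<le> s k;
              c' = promote (1/\<gamma>) p c i j; \<not> saturated s p c' i;
              set xs = hatJ c' i; distinct xs; sorted_wrt (\<lambda>a b. p a \<ge> p b) xs;
              greedy p (\<gamma> * p j + pot c' i) xs = (R, \<pi>) \<rbrakk> \<Longrightarrow>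
     step m s p \<gamma> c (c'\<lparr>hatJ := (hatJ c')(i := hatJ c' i - R),
                         chkJ := (chkJ c')(i := chkJ c' i \<union> {j}),
                         pot := (pot c')(i := \<pi>),
                         queue := queue c' \<union> R,
                         mode := Idle\<rparr>)"

definition init_cfg :: "(nat \<Rightarrow> real) \<Rightarrow> (nat \<Rightarrow> real) \<Rightarrow> nat \<Rightarrow> nat list \<Rightarrow> cfg" where
  "init_cfg s p j1 rest =
     \<lparr>Tg = p j1 / s 1, hatJ = (\<lambda>i. {}), chkJ = (\<lambda>i. {})(1 := {j1}),
      pot = (\<lambda>i. 0), queue = {}, mode = Idle, pending = rest\<rparr>"

definition reachable :: "nat \<Rightarrow> (nat \<Rightarrow> real) \<Rightarrow> (nat \<Rightarrow> real) \<Rightarrow> real \<Rightarrow> nat list \<Rightarrow> cfg \<Rightarrow> bool" where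
  "reachable m s p \<gamma> js c \<longleftrightarrow>
     js \<noteq> [] \<and> (step m s p \<gamma>)\<^sup>*\<^sup>* (init_cfg s p (hd js) (tl js)) c"

end

theory Submission
  imports Defs "HOL-Library.Disjoint_Sets"
begin

(* Fix a machine with capacity X = T s_i and look at the time since the guess T was last raised.
   Let k be the number and A the total size of the jobs assigned to the machine since then.
   An assignment of j adds p_j to the load, while the greedy step evicts old jobs of total size
   gamma p_j + pi - pi' (pi, pi' the potentials before and after); hence load - (1 - gamma) A - pi
   never grows and stays below the budget (1 + eta) X / xi, the bound that was in force before the
   raise.  The evicted jobs are at least as large as every old job u that stays, which gives
   k p_u <= gamma A - pi, and the potential satisfies pi < p_u.  For k = 1 eligibility gives
   gamma A <= X, for k >= 2 the inequalities give 3 pi < gamma A < budget; in both cases the load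
   is at most (1 + eta) X.  Raising T to xi T turns this bound into the budget of the next phase. *)

section \<open>Greedy eviction\<close>

lemma greedy_Cons_taken [simp]:
  "p j \<le> b \<Longrightarrow> greedy p b (j # js) =
     (insert j (fst (greedy p (b - p j) js)), snd (greedy p (b - p j) js))"
  by (simp add: split_beta)

lemma greedy_Cons_skipped [simp]: "\<not> p j \<le> b \<Longrightarrow> greedy p b (j # js) = greedy p b js"
  by simp

declare greedy.simps(2) [simp del]

lemma greedy_fst_subset: "fst (greedy p b xs) \<subseteq> set xs"
  by (induction xs arbitrary: b) (auto simp: greedy.simps(2) split_beta)

lemma greedy_snd_eq:
  "distinct xs \<Longrightarrow> snd (greedy p b xs) = b - sum p (fst (greedy p b xs))"
proof (induction xs arbitrary: b)
  case (Cons j js)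
  then show ?case
    using greedy_fst_subset[of p "b - p j" js]
    by (cases "p j \<le> b") (auto simp: sum.insert_if finite_subset)
qed simp

lemma greedy_snd_nonneg: "0 \<le> b \<Longrightarrow> 0 \<le> snd (greedy p b xs)"
  by (induction xs arbitrary: b) (auto simp: greedy.simps(2) split_beta)

lemma greedy_snd_le: "\<forall>x\<in>set xs. 0 \<le> p x \<Longrightarrow> snd (greedy p b xs) \<le> b"
proof (induction xs arbitrary: b)
  case (Cons j js)
  have IH: "snd (greedy p b' js) \<le> b'" for b'
    using Cons by simp
  show ?case
    using IH[of "b - p j"] IH[of b] Cons.prems by (cases "p j \<le> b") auto
qed simp

lemma greedy_snd_less_skipped:
  "\<forall>x\<in>set xs. 0 \<le> p x \<Longrightarrow> x \<in> set xs \<Longrightarrow> x \<notin> fst (greedy p b xs) \<Longrightarrow> snd (greedy p b xs) < p x"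
proof (induction xs arbitrary: b)
  case (Cons j js)
  then show ?case
    using greedy_snd_le[of js p b] by (cases "p j \<le> b") auto
qed simp

lemma member_le_sum_greedy_fst:
  assumes "sorted_wrt (\<lambda>a b. p a \<ge> p b) xs" "distinct xs" "\<forall>x\<in>set xs. 0 \<le> p x \<and> p x \<le> b"
    and "u \<in> set xs"
  shows "p u \<le> sum p (fst (greedy p b xs))"
proof -
  obtain x ys where xs: "xs = x # ys" using \<open>u \<in> set xs\<close> by (cases xs) auto
  have "p u \<le> p x" using assms(1,4) xs by auto
  also have "p x \<le> sum p (insert x (fst (greedy p (b - p x) ys)))"
    using assms(3) greedy_fst_subset[of p "b - p x" ys] xs
    by (intro member_le_sum) (auto intro: finite_subset)
  finally show ?thesis using assms(3) xs by simp
qed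

lemma greedy_evict:
  assumes xs: "set xs = H" "distinct xs" "sorted_wrt (\<lambda>a b. p a \<ge> p b) xs"
    and bounded: "\<forall>x\<in>H. 0 \<le> p x \<and> p x \<le> b" and greedy: "greedy p b xs = (R, \<pi>')"
  shows "R \<subseteq> H" "\<pi>' = b - sum p R" "\<And>u. u \<in> H - R \<Longrightarrow> \<pi>' < p u"
    and "\<And>u. u \<in> H \<Longrightarrow> p u \<le> sum p R"
proof -
  show "R \<subseteq> H"
    using greedy_fst_subset[of p b xs] xs(1) greedy by simp
  show "\<pi>' = b - sum p R"
    using greedy_snd_eq[OF xs(2), of p b] greedy by simp
  show "\<pi>' < p u" if "u \<in> H - R" for u
    using greedy_snd_less_skipped[of xs p u b] xs(1) bounded greedy that by simp
  show "p u \<le> sum p R" if "u \<in> H" for u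
    using member_le_sum_greedy_fst[OF xs(3,2), of b u] xs(1) bounded greedy that by simp
qed

section \<open>Accounting on a single machine\<close>

lemma load_bound_after_assignments:
  fixes \<gamma> X C Lold Lnew A \<pi> u :: real and k :: nat
  assumes \<gamma>: "0 < \<gamma>" "\<gamma> < 1" and X: "0 < X"
    and C: "C = (1 + 1/\<gamma>) * X / (1/\<gamma> + 1/3)"
    and budget: "Lold + Lnew - (1 - \<gamma>) * A - \<pi> \<le> C"
    and "A \<le> Lnew" "0 \<le> \<pi>" "\<pi> < u" "u \<le> Lold"
    and "1 \<le> k" "real k * u \<le> \<gamma> * A - \<pi>" "k = 1 \<Longrightarrow> \<gamma> * A \<le> X"
  shows "Lold + Lnew \<le> (1 + 1/\<gamma>) * X"
proof -
  have "0 < 1/\<gamma> + 1/3"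
    using \<gamma> by (simp add: add_pos_pos)
  then have C_eq: "C * (1/\<gamma> + 1/3) = (1 + 1/\<gamma>) * X"
    by (simp add: C)
  consider "k = 1" | "2 \<le> k" using \<open>1 \<le> k\<close> by linarith
  then show ?thesis
  proof cases
    case 1
    have "2 * \<pi> < \<gamma> * A" using assms 1 by simp
    have "C * (1/\<gamma> + 1/3) \<le> (3/2 * X) * (1/\<gamma> + 1/3)"
      unfolding C_eq using \<gamma> X by (simp add: field_simps)
    then have "C \<le> 3/2 * X"
      using \<open>0 < 1/\<gamma> + 1/3\<close> by simp
    have "(1 - \<gamma>) * A + \<pi> \<le> (1/\<gamma> - 1/2) * (\<gamma> * A)"
      using \<gamma> \<open>2 * \<pi> < \<gamma> * A\<close> by (simp add: algebra_simps)
    also have "\<dots> \<le> (1/\<gamma> - 1/2) * X"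
      using \<gamma> 1 assms by (intro mult_left_mono) auto
    finally show ?thesis
      using budget \<open>C \<le> 3/2 * X\<close> by (simp add: algebra_simps)
  next
    case 2
    have "2 * u \<le> \<gamma> * A - \<pi>"
      using assms 2 mult_right_mono[of 2 "real k" u] by linarith
    then have "3 * \<pi> < \<gamma> * A" using assms by linarith
    have "\<gamma> * A < C"
      using assms by (simp add: algebra_simps)
    have "(1 - \<gamma>) * A + \<pi> \<le> (1/\<gamma> - 2/3) * (\<gamma> * A)"
      using \<gamma> \<open>3 * \<pi> < \<gamma> * A\<close> by (simp add: algebra_simps)
    also have "\<dots> \<le> (1/\<gamma> - 2/3) * C"
      using \<gamma> \<open>\<gamma> * A < C\<close> by (intro mult_left_mono) (auto simp: le_divide_eq)
    finally show ?thesis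
      using budget C_eq by (simp add: algebra_simps)
  qed
qed

definition machine_inv :: "real \<Rightarrow> (nat \<Rightarrow> real) \<Rightarrow> real \<Rightarrow> nat set \<Rightarrow> nat set \<Rightarrow> real \<Rightarrow> bool" where
  "machine_inv \<gamma> p X H K \<pi> \<longleftrightarrow>
     0 \<le> \<pi> \<and> (\<forall>u\<in>H. \<pi> < p u) \<and> sum p H + sum p K \<le> (1 + 1/\<gamma>) * X \<and>
     (\<exists>A k. 0 \<le> A \<and> A \<le> sum p K \<and> (k = 0 \<longrightarrow> A = 0) \<and> (k = 1 \<longrightarrow> \<gamma> * A \<le> X) \<and>
        sum p H + sum p K - (1 - \<gamma>) * A - \<pi> \<le> (1 + 1/\<gamma>) * X / (1/\<gamma> + 1/3) \<and>
        (\<forall>u\<in>H. real k * p u \<le> \<gamma> * A - \<pi>))"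

lemma machine_invI:
  assumes "0 \<le> \<pi>" "\<And>u. u \<in> H \<Longrightarrow> \<pi> < p u" "sum p H + sum p K \<le> (1 + 1/\<gamma>) * X"
    and "0 \<le> A" "A \<le> sum p K" "k = 0 \<Longrightarrow> A = 0" "k = 1 \<Longrightarrow> \<gamma> * A \<le> X"
    and "sum p H + sum p K - (1 - \<gamma>) * A - \<pi> \<le> (1 + 1/\<gamma>) * X / (1/\<gamma> + 1/3)"
    and "\<And>u. u \<in> H \<Longrightarrow> real k * p u \<le> \<gamma> * A - \<pi>"
  shows "machine_inv \<gamma> p X H K \<pi>"
  unfolding machine_inv_def using assms
  by (intro conjI exI[of _ A] exI[of _ k] ballI impI) simp_all

lemma machine_invE:
  assumes "machine_inv \<gamma> p X H K \<pi>"
  obtains A k where "0 \<le> \<pi>" "\<forall>u\<in>H. \<pi> < p u" "sum p H + sum p K \<le> (1 + 1/\<gamma>) * X"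
    and "0 \<le> A" "A \<le> sum p K" "k = 0 \<longrightarrow> A = 0" "k = 1 \<longrightarrow> \<gamma> * A \<le> X"
    and "sum p H + sum p K - (1 - \<gamma>) * A - \<pi> \<le> (1 + 1/\<gamma>) * X / (1/\<gamma> + 1/3)"
    and "\<forall>u\<in>H. real k * p u \<le> \<gamma> * A - \<pi>"
  using assms unfolding machine_inv_def by (elim conjE exE) (rule that; assumption)

lemma machine_inv_load_le: "machine_inv \<gamma> p X H K \<pi> \<Longrightarrow> sum p H + sum p K \<le> (1 + 1/\<gamma>) * X"
  by (erule machine_invE)

lemma machine_inv_empty:
  assumes "0 < \<gamma>" "0 \<le> X"
  shows "machine_inv \<gamma> p X {} {} 0"
  using assms by (intro machine_invI[where A = 0 and k = 0]) (auto intro!: divide_nonneg_pos add_pos_pos)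

lemma machine_inv_singleton:
  assumes "0 < \<gamma>" "\<gamma> < 1" "0 < p j"
  shows "machine_inv \<gamma> p (p j) {} {j} 0"
proof -
  have "\<gamma> * \<gamma> \<le> 1"
    using assms by (simp add: mult_le_one)
  then have "\<gamma> * p j * (1/\<gamma> + 1/3) \<le> (1 + 1/\<gamma>) * p j"
    using assms by (simp add: field_simps)
  then have "\<gamma> * p j \<le> (1 + 1/\<gamma>) * p j / (1/\<gamma> + 1/3)"
    using assms by (simp add: pos_le_divide_eq add_pos_pos)
  then show ?thesis
    using assms by (intro machine_invI[where A = "p j" and k = 1]) (auto simp: algebra_simps)
qed

lemma machine_inv_promote:
  assumes inv: "machine_inv \<gamma> p X H K \<pi>" and "finite H" "finite K" "H \<inter> K = {}" "B \<subseteq> H"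
  shows "machine_inv \<gamma> p X (H - B) (K \<union> B) \<pi>"
proof -
  obtain A k where \<pi>: "0 \<le> \<pi>" "\<forall>u\<in>H. \<pi> < p u"
    and load: "sum p H + sum p K \<le> (1 + 1/\<gamma>) * X"
    and A: "0 \<le> A" "A \<le> sum p K" "k = 0 \<longrightarrow> A = 0" "k = 1 \<longrightarrow> \<gamma> * A \<le> X"
    and budget: "sum p H + sum p K - (1 - \<gamma>) * A - \<pi> \<le> (1 + 1/\<gamma>) * X / (1/\<gamma> + 1/3)"
    and slack: "\<forall>u\<in>H. real k * p u \<le> \<gamma> * A - \<pi>"
    using inv by (rule machine_invE)
  have "finite B" "K \<inter> B = {}"
    using assms finite_subset by blast+
  then have sums: "sum p (H - B) = sum p H - sum p B" "sum p (K \<union> B) = sum p K + sum p B"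
    using assms by (simp_all add: sum_diff sum.union_disjoint)
  have "0 \<le> sum p B"
    using \<pi> \<open>B \<subseteq> H\<close> by (force intro: sum_nonneg)
  then show ?thesis
    using \<pi> load A budget slack
    by (intro machine_invI[where A = A and k = k]) (auto simp: sums)
qed

lemma machine_inv_raise:
  assumes inv: "machine_inv \<gamma> p X H K \<pi>" and "finite H" "finite K" "H \<inter> K = {}"
    and "\<forall>x\<in>K. 0 < p x" and \<gamma>: "0 < \<gamma>" "\<gamma> < 1" and "0 < X"
  shows "machine_inv \<gamma> p ((1/\<gamma> + 1/3) * X) (H \<union> K) {} 0"
proof -
  obtain A k where \<pi>: "0 \<le> \<pi>" "\<forall>u\<in>H. \<pi> < p u"
    and load: "sum p H + sum p K \<le> (1 + 1/\<gamma>) * X"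
    using inv by (rule machine_invE)
  have "1 < 1/\<gamma>"
    using \<gamma> by simp
  then have "X \<le> (1/\<gamma> + 1/3) * X"
    using \<open>0 < X\<close> mult_right_mono[of 1 "1/\<gamma> + 1/3" X] by simp
  have "sum p (H \<union> K) \<le> (1 + 1/\<gamma>) * X"
    using load assms by (simp add: sum.union_disjoint)
  also have "\<dots> \<le> (1 + 1/\<gamma>) * ((1/\<gamma> + 1/3) * X)"
    using \<gamma> \<open>X \<le> (1/\<gamma> + 1/3) * X\<close> by (intro mult_left_mono) auto
  finally have "sum p (H \<union> K) \<le> (1 + 1/\<gamma>) * ((1/\<gamma> + 1/3) * X)" .
  moreover have "(1 + 1/\<gamma>) * ((1/\<gamma> + 1/3) * X) / (1/\<gamma> + 1/3) = (1 + 1/\<gamma>) * X"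
    using \<open>1 < 1/\<gamma>\<close> by simp
  moreover have "0 < p u" if "u \<in> H \<union> K" for u
    using that \<pi> assms(5) by fastforce
  ultimately show ?thesis
    using load assms by (intro machine_invI[where A = 0 and k = 0]) (auto simp: sum.union_disjoint)
qed

lemma machine_inv_assign:
  assumes inv: "machine_inv \<gamma> p X H K \<pi>" and "finite H" "finite K" "j \<notin> K"
    and \<gamma>: "0 < \<gamma>" "\<gamma> < 1" and "0 < X"
    and j: "0 < p j" "\<gamma> * p j \<le> X" and unsaturated: "sum p K < X"
    and small: "\<forall>x\<in>H. p x < \<gamma> * p j"
    and xs: "set xs = H" "distinct xs" "sorted_wrt (\<lambda>a b. p a \<ge> p b) xs"
    and greedy: "greedy p (\<gamma> * p j + \<pi>) xs = (R, \<pi>')"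
  shows "machine_inv \<gamma> p X (H - R) (K \<union> {j}) \<pi>'"
proof -
  obtain A k where \<pi>: "0 \<le> \<pi>" "\<forall>u\<in>H. \<pi> < p u"
    and A: "0 \<le> A" "A \<le> sum p K" "k = 0 \<longrightarrow> A = 0" "k = 1 \<longrightarrow> \<gamma> * A \<le> X"
    and budget: "sum p H + sum p K - (1 - \<gamma>) * A - \<pi> \<le> (1 + 1/\<gamma>) * X / (1/\<gamma> + 1/3)"
    and slack: "\<forall>u\<in>H. real k * p u \<le> \<gamma> * A - \<pi>"
    using inv by (rule machine_invE)
  have bounded: "\<forall>x\<in>H. 0 \<le> p x \<and> p x \<le> \<gamma> * p j + \<pi>"
  proof
    fix x assume "x \<in> H"
    then have "\<pi> < p x" "p x < \<gamma> * p j"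
      using small \<pi>(2) by auto
    then show "0 \<le> p x \<and> p x \<le> \<gamma> * p j + \<pi>"
      using \<pi>(1) by simp
  qed
  note R = greedy_evict(1,2)[OF xs bounded greedy]
    and left = greedy_evict(3)[OF xs bounded greedy]
    and freed = greedy_evict(4)[OF xs bounded greedy]
  have "0 \<le> \<gamma> * p j + \<pi>"
    using \<gamma> j \<pi> by simp
  then have "0 \<le> \<pi>'"
    using greedy_snd_nonneg[of "\<gamma> * p j + \<pi>" p xs] greedy by simp
  have sums: "sum p (H - R) = sum p H - sum p R" "sum p (K \<union> {j}) = sum p K + p j"
    using R(1) \<open>finite H\<close> \<open>finite K\<close> \<open>j \<notin> K\<close> by (simp_all add: sum_diff)
  let ?A = "A + p j"
  have budget': "sum p (H - R) + sum p (K \<union> {j}) - (1 - \<gamma>) * ?A - \<pi>'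
      \<le> (1 + 1/\<gamma>) * X / (1/\<gamma> + 1/3)"
    using budget unfolding sums R(2) by (simp add: algebra_simps)
  have slack': "real (Suc k) * p u \<le> \<gamma> * ?A - \<pi>'" if "u \<in> H - R" for u
  proof -
    have "real k * p u \<le> \<gamma> * A - \<pi>" "p u \<le> sum p R"
      using slack freed that by auto
    then show ?thesis
      unfolding R(2) by (simp add: algebra_simps)
  qed
  have A': "?A \<le> sum p (K \<union> {j})"
    using A(2) sums(2) by simp
  have first: "Suc k = 1 \<Longrightarrow> \<gamma> * ?A \<le> X"
    using A(3) j by simp
  have load: "sum p (H - R) + sum p (K \<union> {j}) \<le> (1 + 1/\<gamma>) * X"
  proof (cases "H - R = {}")
    case True
    have "p j \<le> X / \<gamma>"
      using j \<gamma> by (simp add: pos_le_divide_eq mult.commute)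
    moreover have "sum p (H - R) = 0"
      using True by (simp only: sum.empty)
    ultimately show ?thesis
      using sums(2) unsaturated by (simp add: algebra_simps)
  next
    case False
    then obtain u where u: "u \<in> H - R"
      by blast
    have "p u \<le> sum p (H - R)"
      using u \<open>finite H\<close> bounded by (intro member_le_sum) auto
    then show ?thesis
      using load_bound_after_assignments[OF \<gamma> \<open>0 < X\<close> refl budget' _ \<open>0 \<le> \<pi>'\<close> left[OF u]
          _ _ slack'[OF u] first] A'
      by simp
  qed
  show ?thesis
    using \<open>0 \<le> \<pi>'\<close> left load A(1) A' first budget' slack' j(1)
    by (intro machine_invI[where A = "A + p j" and k = "Suc k"]) auto
qed

section \<open>Where the jobs are\<close>

definition move :: "'b set \<Rightarrow> 'a \<Rightarrow> 'a \<Rightarrow> ('a \<Rightarrow> 'b set) \<Rightarrow> 'a \<Rightarrow> 'b set" where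
  "move B a b F = F(a := F a - B, b := F b \<union> B)"

lemma disjoint_family_move:
  assumes "disjoint_family F" "a \<noteq> b" "B \<subseteq> F a"
  shows "disjoint_family (move B a b F)"
  using assms unfolding disjoint_family_on_def move_def by (auto 0 4)

lemma UN_move: "B \<subseteq> F a \<Longrightarrow> (\<Union>x. move B a b F x) = (\<Union>x. F x)"
  unfolding move_def by auto

lemma disjoint_family_relabel:
  fixes F :: "'a \<Rightarrow> 'c set" and r :: "'a \<Rightarrow> 'b"
  assumes "disjoint_family F"
  shows "disjoint_family (\<lambda>x. \<Union>y\<in>r -` {x}. F y)"
  unfolding disjoint_family_on_def
proof (intro ballI impI)
  fix x x' :: 'b assume "x \<noteq> x'"
  then have "F y \<inter> F y' = {}" if "r y = x" "r y' = x'" for y y'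
    using that disjoint_family_onD[OF assms, of y y'] by blast
  then show "(\<Union>y\<in>r -` {x}. F y) \<inter> (\<Union>y\<in>r -` {x'}. F y) = {}"
    by blast
qed

lemma UN_relabel: "(\<Union>x. \<Union>y\<in>r -` {x}. F y) = (\<Union>y. F y)"
  by blast

datatype place = Arriving | Queued | Selected | Old nat | New nat

definition jobs_at :: "cfg \<Rightarrow> place \<Rightarrow> nat set" where
  "jobs_at c x = (case x of
      Arriving \<Rightarrow> set (pending c)
    | Queued \<Rightarrow> queue c
    | Selected \<Rightarrow> (case mode c of Idle \<Rightarrow> {} | Search j \<Rightarrow> {j})
    | Old i \<Rightarrow> hatJ c i
    | New i \<Rightarrow> chkJ c i)"

definition well_placed :: "nat list \<Rightarrow> cfg \<Rightarrow> bool" where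
  "well_placed js c \<longleftrightarrow>
     disjoint_family (jobs_at c) \<and> (\<Union>x. jobs_at c x) = set js \<and> distinct (pending c)"

fun retire :: "place \<Rightarrow> place" where
  "retire (New i) = Old i"
| "retire x = x"

lemma retire_vimage:
  "retire -` {Old i} = {Old i, New i}" "retire -` {New i} = {}"
  "retire -` {Arriving} = {Arriving}" "retire -` {Queued} = {Queued}" "retire -` {Selected} = {Selected}"
  by (auto elim: retire.elims)

lemma well_placed_move:
  assumes "well_placed js c" "jobs_at c' = move B a b (jobs_at c)" "a \<noteq> b" "B \<subseteq> jobs_at c a"
    and "distinct (pending c')"
  shows "well_placed js c'"
  using assms disjoint_family_move UN_move unfolding well_placed_def by metis

lemma well_placed_machine:
  assumes "well_placed js c"
  shows "hatJ c i \<inter> chkJ c i = {}" "hatJ c i \<union> chkJ c i \<subseteq> set js"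
proof -
  have "jobs_at c (Old i) \<inter> jobs_at c (New i) = {}"
    using assms disjoint_family_onD[of "jobs_at c" UNIV "Old i" "New i"]
    unfolding well_placed_def by simp
  then show "hatJ c i \<inter> chkJ c i = {}"
    by (simp add: jobs_at_def)
  have "jobs_at c (Old i) \<union> jobs_at c (New i) \<subseteq> set js"
    using assms unfolding well_placed_def by blast
  then show "hatJ c i \<union> chkJ c i \<subseteq> set js"
    by (simp add: jobs_at_def)
qed

lemma well_placed_selected:
  assumes "well_placed js c" "mode c = Search j"
  shows "j \<in> set js" "j \<notin> hatJ c i \<union> chkJ c i"
proof -
  have "jobs_at c Selected \<subseteq> set js"
    using assms(1) unfolding well_placed_def by blast
  then show "j \<in> set js"
    using assms(2) by (simp add: jobs_at_def)
  have "jobs_at c Selected \<inter> (jobs_at c (Old i) \<union> jobs_at c (New i)) = {}"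
    using assms(1) unfolding well_placed_def by (auto dest: disjoint_family_onD)
  then show "j \<notin> hatJ c i \<union> chkJ c i"
    using assms(2) by (simp add: jobs_at_def)
qed

lemma well_placed_init:
  assumes "distinct js" "js \<noteq> []"
  shows "well_placed js (init_cfg s p (hd js) (tl js))"
proof -
  obtain j1 rest where js: "js = j1 # rest"
    using assms(2) by (cases js) auto
  show ?thesis
    using assms(1) unfolding js well_placed_def disjoint_family_on_def
    by (auto simp: jobs_at_def init_cfg_def split: place.splits if_splits)
qed

lemma promote_simps [simp]:
  "Tg (promote \<eta> p c i j) = Tg c" "pot (promote \<eta> p c i j) = pot c"
  "queue (promote \<eta> p c i j) = queue c" "mode (promote \<eta> p c i j) = mode c"
  "pending (promote \<eta> p c i j) = pending c"
  "hatJ (promote \<eta> p c i j) = (hatJ c)(i := hatJ c i - {x \<in> hatJ c i. p j / \<eta> \<le> p x})"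
  "chkJ (promote \<eta> p c i j) = (chkJ c)(i := chkJ c i \<union> {x \<in> hatJ c i. p j / \<eta> \<le> p x})"
  unfolding promote_def Let_def by auto

lemma well_placed_promote: "well_placed js c \<Longrightarrow> well_placed js (promote \<eta> p c i j)"
  by (rule well_placed_move[where B = "{x \<in> hatJ c i. p j / \<eta> \<le> p x}" and a = "Old i" and b = "New i"])
    (auto simp: jobs_at_def move_def fun_eq_iff well_placed_def split: place.split)

lemma well_placed_step:
  assumes "step m s p \<gamma> c c'" "well_placed js c"
  shows "well_placed js c'"
  using assms(1)
proof cases
  case (arrive j rest)
  then show ?thesis
    using assms(2)
    by (intro well_placed_move[OF assms(2), where B = "{j}" and a = Arriving and b = Queued])
      (auto simp: jobs_at_def move_def fun_eq_iff well_placed_def split: place.split)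
next
  case (pop j)
  then show ?thesis
    using assms(2)
    by (intro well_placed_move[OF assms(2), where B = "{j}" and a = Queued and b = Selected])
      (auto simp: jobs_at_def move_def fun_eq_iff well_placed_def split: place.split)
next
  case (fail j)
  then have "jobs_at c' = (\<lambda>x. \<Union>y\<in>retire -` {x}. jobs_at c y)"
    by (auto simp: fun_eq_iff jobs_at_def retire_vimage split: place.split)
  moreover have "pending c' = pending c"
    using fail(1) by simp
  ultimately show ?thesis
    using assms(2) unfolding well_placed_def by (simp add: disjoint_family_relabel UN_relabel)
next
  case (fit_sat j i)
  then show ?thesis
    using assms(2) well_placed_promote by blast
next
  case (fit_assign j i c1 xs R \<pi>)
  let ?F = "move R (Old i) Queued (jobs_at c1)"
  have wp1: "well_placed js c1"
    using assms(2) fit_assign(5) well_placed_promote by blast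
  have "R \<subseteq> hatJ c1 i"
    using greedy_fst_subset[of p "\<gamma> * p j + pot c1 i" xs] fit_assign(7,10) by simp
  then have "R \<subseteq> jobs_at c1 (Old i)"
    by (simp add: jobs_at_def)
  then have "disjoint_family ?F" "(\<Union>x. ?F x) = set js"
    using wp1 unfolding well_placed_def by (simp_all add: disjoint_family_move UN_move)
  moreover have "{j} \<subseteq> ?F Selected"
    using fit_assign(2,5) by (simp add: move_def jobs_at_def)
  moreover have "jobs_at c' = move {j} Selected (New i) ?F"
    using fit_assign(1,2,5) by (auto simp: jobs_at_def move_def fun_eq_iff split: place.split)
  moreover have "pending c' = pending c1"
    using fit_assign(1) by simp
  ultimately show ?thesis
    using wp1 unfolding well_placed_def by (simp add: disjoint_family_move UN_move)
qed

section \<open>The load invariant\<close>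

definition load_inv :: "nat \<Rightarrow> (nat \<Rightarrow> real) \<Rightarrow> (nat \<Rightarrow> real) \<Rightarrow> real \<Rightarrow> cfg \<Rightarrow> bool" where
  "load_inv m s p \<gamma> c \<longleftrightarrow>
     0 < Tg c \<and> (\<forall>i\<in>{1..m}. machine_inv \<gamma> p (Tg c * s i) (hatJ c i) (chkJ c i) (pot c i))"

lemma load_inv_init:
  assumes "0 < \<gamma>" "\<gamma> < 1" "1 \<le> m" "\<forall>i\<in>{1..m}. 0 < s i" "0 < p j"
  shows "load_inv m s p \<gamma> (init_cfg s p j rest)"
proof -
  have "0 < s 1"
    using assms(3,4) by simp
  then have "machine_inv \<gamma> p (p j / s 1 * s 1) {} {j} 0"
    using machine_inv_singleton[of \<gamma> p j] assms(1,2,5) by simp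
  moreover have "machine_inv \<gamma> p (p j / s 1 * s i) {} {} 0" if "i \<in> {1..m}" for i
  proof -
    have "0 < s i"
      using assms(4) that by blast
    then show ?thesis
      using assms(1,5) \<open>0 < s 1\<close>
      by (intro machine_inv_empty less_imp_le mult_pos_pos divide_pos_pos) simp_all
  qed
  ultimately show ?thesis
    using assms(5) \<open>0 < s 1\<close> unfolding load_inv_def init_cfg_def by auto
qed

lemma load_inv_promote:
  assumes "load_inv m s p \<gamma> c" "well_placed js c"
  shows "load_inv m s p \<gamma> (promote \<eta> p c i j)"
proof -
  have "machine_inv \<gamma> p (Tg c * s i) (hatJ c i - {x \<in> hatJ c i. p j / \<eta> \<le> p x})
      (chkJ c i \<union> {x \<in> hatJ c i. p j / \<eta> \<le> p x}) (pot c i)" if "i \<in> {1..m}"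
    using assms well_placed_machine[OF assms(2), of i] that unfolding load_inv_def
    by (intro machine_inv_promote) (auto intro: finite_subset)
  then show ?thesis
    using assms(1) unfolding load_inv_def by auto
qed

lemma load_inv_step:
  assumes \<gamma>: "0 < \<gamma>" "\<gamma> < 1" and s: "\<forall>i\<in>{1..m}. 0 < s i" and p: "\<forall>j\<in>set js. 0 < p j"
    and "step m s p \<gamma> c c'" "well_placed js c" "load_inv m s p \<gamma> c"
  shows "load_inv m s p \<gamma> c'"
  using assms(5)
proof cases
  case (arrive j rest)
  then show ?thesis
    using assms(7) unfolding load_inv_def by simp
next
  case (pop j)
  then show ?thesis
    using assms(7) unfolding load_inv_def by simp
next
  case (fail j)
  have "machine_inv \<gamma> p ((1/\<gamma> + 1/3) * (Tg c * s i)) (hatJ c i \<union> chkJ c i) {} 0"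
    if "i \<in> {1..m}" for i
    using assms(6,7) well_placed_machine[OF assms(6), of i] p s that unfolding load_inv_def
    by (intro machine_inv_raise[OF _ _ _ _ _ \<gamma>]) (auto intro: finite_subset)
  moreover have "0 < 1/\<gamma> + 1/3"
    using \<gamma> by (simp add: add_pos_pos)
  ultimately show ?thesis
    using assms(7) fail(1) unfolding load_inv_def by (simp add: mult.assoc)
next
  case (fit_sat j i)
  then show ?thesis
    using assms(6,7) load_inv_promote by blast
next
  case (fit_assign j i c1 xs R \<pi>)
  have inv1: "load_inv m s p \<gamma> c1" and wp1: "well_placed js c1"
    using assms(6,7) fit_assign(5) load_inv_promote well_placed_promote by blast+
  have i: "i \<in> {1..m}" "0 < s i"
    using fit_assign(3) s unfolding Mt_def by auto
  have "mode c1 = Search j"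
    using fit_assign(2,5) by simp
  then have j: "j \<in> set js" "j \<notin> chkJ c1 i"
    using well_placed_selected[OF wp1] by auto
  have "machine_inv \<gamma> p (Tg c1 * s i) (hatJ c1 i - R) (chkJ c1 i \<union> {j}) \<pi>"
  proof (rule machine_inv_assign[OF _ _ _ j(2) \<gamma> _ _ _ _ _ fit_assign(7-10)])
    show "machine_inv \<gamma> p (Tg c1 * s i) (hatJ c1 i) (chkJ c1 i) (pot c1 i)" "0 < Tg c1 * s i"
      using inv1 i unfolding load_inv_def by auto
    show "finite (hatJ c1 i)" "finite (chkJ c1 i)"
      using well_placed_machine(2)[OF wp1, of i] by (auto intro: finite_subset)
    show "0 < p j"
      using p j(1) by blast
    show "\<gamma> * p j \<le> Tg c1 * s i"
      using fit_assign(3,5) i \<gamma> unfolding Mt_def eligible_def by (simp add: divide_le_eq field_simps)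
    show "sum p (chkJ c1 i) < Tg c1 * s i"
      using fit_assign(6) i unfolding saturated_def new_load_def by (simp add: not_le pos_divide_less_eq)
    show "\<forall>x\<in>hatJ c1 i. p x < \<gamma> * p j"
      using fit_assign(5) by (auto simp: mult.commute)
  qed
  then show ?thesis
    using inv1 fit_assign(1) unfolding load_inv_def by auto
qed

lemma load_inv_imp_load_le:
  assumes "well_placed js c" "load_inv m s p \<gamma> c" "i \<in> {1..m}" "0 < s i"
  shows "load s p c i \<le> (1 + 1/\<gamma>) * Tg c"
proof -
  have "finite (hatJ c i)" "finite (chkJ c i)" "hatJ c i \<inter> chkJ c i = {}"
    using well_placed_machine[OF assms(1), of i] by (auto intro: finite_subset)
  moreover have "machine_inv \<gamma> p (Tg c * s i) (hatJ c i) (chkJ c i) (pot c i)"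
    using assms(2,3) unfolding load_inv_def by blast
  ultimately have "sum p (hatJ c i \<union> chkJ c i) \<le> (1 + 1/\<gamma>) * Tg c * s i"
    using machine_inv_load_le by (simp add: sum.union_disjoint mult.assoc)
  then show ?thesis
    using assms(4) unfolding load_def by (simp add: divide_le_eq)
qed

theorem lemma8:
  fixes m :: nat and s p :: "nat \<Rightarrow> real" and \<gamma> :: real and js :: "nat list" and c :: cfg
  assumes "0 < \<gamma>" and "\<gamma> < 1"
    and "1 \<le> m"
    and "\<forall>i\<in>{1..m}. 0 < s i"
    and "\<forall>i j. 1 \<le> i \<longrightarrow> i \<le> j \<longrightarrow> j \<le> m \<longrightarrow> s j \<le> s i"
    and "distinct js" and "\<forall>j\<in>set js. 0 < p j"
    and "reachable m s p \<gamma> js c"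
  shows "\<forall>i\<in>{1..m}. load s p c i \<le> (1 + 1/\<gamma>) * Tg c"
proof -
  have "js \<noteq> []" and run: "(step m s p \<gamma>)\<^sup>*\<^sup>* (init_cfg s p (hd js) (tl js)) c"
    using assms(8) unfolding reachable_def by auto
  from run have "well_placed js c \<and> load_inv m s p \<gamma> c"
  proof (induction rule: rtranclp_induct)
    case base
    show ?case
      using assms \<open>js \<noteq> []\<close> well_placed_init load_inv_init by simp
  next
    case (step c' c'')
    then show ?case
      using assms well_placed_step load_inv_step by blast
  qed
  then show ?thesis
    using assms(4) load_inv_imp_load_le by blast
qed

end
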